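(* For every prime $p$, every $q=p^e$ ($e\ge1$) and every $m\ge2$, we have $\mathrm{Code}_p(\mathrm{AG}_1(m,q))=\mathrm{Code}_p(\mathcal{T}_A(m,q))$ (as subspaces of $\mathbb{F}_p^{X}$, $X=\mathbb{A}^m(\mathbb{F}_q)$).
   Context: $\mathrm{AG}_1(m,q)$ is the block design whose points are the points of $\mathbb{A}^m(\mathbb{F}_q)$ and whose blocks are all affine lines of $\mathbb{A}^m(\mathbb{F}_q)$. $\mathcal{T}_A(m,q)$ is the design with the same point set, obtained by fixing $q$ pairwise parallel hyperplanes $H_1,\dots,H_q$ partitioning $\mathbb{A}^m(\mathbb{F}_q)$ (the groups) and taking as blocks all affine lines not contained in any $H_j$. For a block design $(X,\mathcal{B})$ and prime power $r$, $\mathrm{Code}_r$ of the design is the $\mathbb{F}_r$-linear code $\{c\in\mathbb{F}_r^X:\ \sum_{x\in B}c_x=0\ \forall B\in\mathcal{B}\}$. *)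

theory Defs
  imports Main "HOL-Computational_Algebra.Primes" "HOL-Library.Cardinality"
begin

text \<open>Points of the affine space A^m(F_q) are functions 'n \<Rightarrow> 'a with 'n a finite
  index type of cardinality m and 'a a finite field with q elements.\<close>

definition affine_lines :: "('n::finite \<Rightarrow> 'a::field) set set" where
  "affine_lines = {range (\<lambda>t. (\<lambda>i. a i + t * d i)) | a d. \<exists>i. d i \<noteq> 0}"

definition AG1_blocks :: "('n::finite \<Rightarrow> 'a::field) set set" where
  "AG1_blocks = affine_lines"

text \<open>The q pairwise parallel hyperplanes partitioning the space are the level sets
  H_b = {x. c . x = b}, b in F_q, of a nonzero linear functional given by c.\<close>
definition parallel_hyperplane :: "('n::finite \<Rightarrow> 'a::field) \<Rightarrow> 'a \<Rightarrow> ('n \<Rightarrow> 'a) set" where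
  "parallel_hyperplane c b = {x. (\<Sum>i\<in>UNIV. c i * x i) = b}"

definition TA_blocks :: "('n::finite \<Rightarrow> 'a::field) \<Rightarrow> ('n \<Rightarrow> 'a) set set" where
  "TA_blocks c = {L \<in> affine_lines. \<forall>b. \<not> L \<subseteq> parallel_hyperplane c b}"

definition design_code :: "'x set set \<Rightarrow> ('x \<Rightarrow> 'b::field) set" where
  "design_code B = {w. \<forall>L\<in>B. (\<Sum>x\<in>L. w x) = 0}"

end

theory Submission
  imports Defs
begin

text \<open>Every line of \<open>AG\<^sub>1(m,q)\<close> missing from \<open>\<T>\<^sub>A(m,q)\<close> is a line \<open>a + \<langle>d\<rangle>\<close> inside a group,
  i.e. with \<open>c \<cdot> d = 0\<close>. Choose \<open>u\<close> with \<open>c \<cdot> u \<noteq> 0\<close>; in the plane \<open>a + \<langle>u, d\<rangle>\<close> the lines with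
  directions \<open>u + l d\<close> all belong to \<open>\<T>\<^sub>A\<close>. Summing a codeword over the \<open>q\<close> such lines through one
  point of the parallel line \<open>a + k u + \<langle>d\<rangle>\<close> counts that point \<open>q \<equiv> 0\<close> times and every other point
  of the plane off this line once. Hence all \<open>q\<close> lines parallel to \<open>a + \<langle>d\<rangle>\<close> in the plane have
  the same sum, which is therefore \<open>q\<close> times itself, i.e. zero.\<close>

definition dot :: "('n::finite \<Rightarrow> 'a::field) \<Rightarrow> ('n \<Rightarrow> 'a) \<Rightarrow> 'a" where
  "dot c x = (\<Sum>i\<in>UNIV. c i * x i)"

definition line :: "('n \<Rightarrow> 'a::field) \<Rightarrow> ('n \<Rightarrow> 'a) \<Rightarrow> ('n \<Rightarrow> 'a) set" where
  "line a d = range (\<lambda>t. \<lambda>i. a i + t * d i)"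

definition sum_on_line ::
    "(('n \<Rightarrow> 'a::{field,finite}) \<Rightarrow> 'b::comm_monoid_add) \<Rightarrow> ('n \<Rightarrow> 'a) \<Rightarrow> ('n \<Rightarrow> 'a) \<Rightarrow> 'b" where
  "sum_on_line w a d = (\<Sum>t\<in>UNIV. w (\<lambda>i. a i + t * d i))"

lemma of_nat_CARD_eq_0: "(of_nat CARD('b::{ring_1,finite}) :: 'b) = 0"
proof -
  have shift: "bij (\<lambda>x::'b. x + 1)"
    by (rule bij_betw_byWitness[where f'="\<lambda>x. x - 1"]) auto
  have "(\<Sum>x\<in>UNIV. x + 1) = (\<Sum>x\<in>(UNIV::'b set). x)"
    using sum.reindex_bij_betw[OF shift, of "\<lambda>x. x"] by simp
  then show ?thesis
    by (simp add: sum.distrib)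
qed

lemma dot_add_scale: "dot c (\<lambda>i. a i + t * d i) = dot c a + t * dot c d"
  by (simp add: dot_def distrib_left sum.distrib sum_distrib_left mult.left_commute)

lemma exists_dot_ne_0:
  assumes "\<exists>j. c j \<noteq> 0"
  obtains u where "dot c u \<noteq> 0"
proof -
  obtain j where j: "c j \<noteq> 0"
    using assms by auto
  have "dot c (\<lambda>i. if i = j then 1 else 0) = c j"
    by (simp add: dot_def if_distrib cong: if_cong)
  with j that show ?thesis
    by metis
qed

lemma dot_ne_0_imp_nonzero:
  assumes "dot c d \<noteq> 0"
  obtains j where "d j \<noteq> 0"
proof -
  have "d \<noteq> (\<lambda>_. 0)"
    using assms by (auto simp: dot_def)
  with that show ?thesis
    by auto
qed

lemma affine_lines_eq: "affine_lines = {line a d | a d. \<exists>i. d i \<noteq> 0}"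
  unfolding affine_lines_def line_def by blast

lemma sum_line:
  assumes j: "d j \<noteq> 0"
  shows "(\<Sum>x\<in>line a d. w x) = sum_on_line w a d"
proof -
  have "inj (\<lambda>t. \<lambda>i. a i + t * d i)"
  proof (rule injI)
    fix s t assume "(\<lambda>i. a i + s * d i) = (\<lambda>i. a i + t * d i)"
    then have "a j + s * d j = a j + t * d j"
      by meson
    with j show "s = t"
      by simp
  qed
  then show ?thesis
    unfolding line_def sum_on_line_def by (simp add: sum.reindex)
qed

lemma line_subset_parallel_hyperplane_iff:
  "(\<exists>b. line a d \<subseteq> parallel_hyperplane c b) \<longleftrightarrow> dot c d = 0"
proof
  assume "\<exists>b. line a d \<subseteq> parallel_hyperplane c b"
  then obtain b where "\<forall>t. dot c (\<lambda>i. a i + t * d i) = b"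
    unfolding line_def parallel_hyperplane_def dot_def by blast
  then have "dot c a + 0 * dot c d = dot c a + 1 * dot c d"
    by (metis dot_add_scale)
  then show "dot c d = 0"
    by simp
next
  assume "dot c d = 0"
  then have "line a d \<subseteq> parallel_hyperplane c (dot c a)"
    unfolding line_def parallel_hyperplane_def
    using dot_add_scale[of c a _ d] by (auto simp: dot_def)
  then show "\<exists>b. line a d \<subseteq> parallel_hyperplane c b" ..
qed

lemma TA_blocks_eq: "TA_blocks c = {line a d | a d. dot c d \<noteq> 0}"
proof -
  have "\<exists>i. d i \<noteq> 0" if "dot c d \<noteq> 0" for d
    using that by (auto elim: dot_ne_0_imp_nonzero)
  then show ?thesis
    unfolding TA_blocks_def affine_lines_eq
    using line_subset_parallel_hyperplane_iff by blast
qed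

lemma design_code_antimono: "B \<subseteq> B' \<Longrightarrow> design_code B' \<subseteq> design_code B"
  unfolding design_code_def by blast

lemma mem_design_code_AG1_blocks_iff:
  "w \<in> design_code AG1_blocks \<longleftrightarrow> (\<forall>a d. (\<exists>i. d i \<noteq> 0) \<longrightarrow> sum_on_line w a d = 0)"
proof -
  have "w \<in> design_code AG1_blocks \<longleftrightarrow> (\<forall>a d. (\<exists>i. d i \<noteq> 0) \<longrightarrow> (\<Sum>x\<in>line a d. w x) = 0)"
    unfolding design_code_def AG1_blocks_def affine_lines_eq by blast
  also have "\<dots> \<longleftrightarrow> (\<forall>a d. (\<exists>i. d i \<noteq> 0) \<longrightarrow> sum_on_line w a d = 0)"
    by (metis sum_line)
  finally show ?thesis .
qed

lemma mem_design_code_TA_blocks_iff: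
  "w \<in> design_code (TA_blocks c) \<longleftrightarrow> (\<forall>a d. dot c d \<noteq> 0 \<longrightarrow> sum_on_line w a d = 0)"
proof -
  have "w \<in> design_code (TA_blocks c) \<longleftrightarrow> (\<forall>a d. dot c d \<noteq> 0 \<longrightarrow> (\<Sum>x\<in>line a d. w x) = 0)"
    unfolding design_code_def TA_blocks_eq by blast
  also have "\<dots> \<longleftrightarrow> (\<forall>a d. dot c d \<noteq> 0 \<longrightarrow> sum_on_line w a d = 0)"
    by (metis sum_line dot_ne_0_imp_nonzero)
  finally show ?thesis .
qed

text \<open>The pencil of lines through \<open>p\<close> with directions \<open>u + l d\<close> covers \<open>p\<close> exactly \<open>q\<close> times
  and every other point of the plane \<open>p + \<langle>u, d\<rangle>\<close> outside \<open>p + \<langle>d\<rangle>\<close> exactly once.\<close>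

lemma sum_pencil:
  fixes w :: "('n::finite \<Rightarrow> 'a::{field,finite}) \<Rightarrow> 'b::ring_1"
  assumes q: "of_nat CARD('a) = (0::'b)"
  shows "(\<Sum>l\<in>UNIV. sum_on_line w p (\<lambda>i. u i + l * d i))
       = (\<Sum>s\<in>UNIV. sum_on_line w (\<lambda>i. p i + s * u i) d) - sum_on_line w p d"
proof -
  have pencil_slice: "(\<Sum>l\<in>UNIV. w (\<lambda>i. (p i + t * u i) + (t * l) * d i))
      = sum_on_line w (\<lambda>i. p i + t * u i) d - (if t = 0 then sum_on_line w p d else 0)" for t
  proof (cases "t = 0")
    case True
    then show ?thesis
      using q by (simp add: sum_on_line_def)
  next
    case False
    have "bij (\<lambda>l. t * l)"
      using False by (intro bij_betw_byWitness[where f'="\<lambda>x. x / t"]) auto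
    then have "(\<Sum>l\<in>UNIV. w (\<lambda>i. (p i + t * u i) + (t * l) * d i)) = sum_on_line w (\<lambda>i. p i + t * u i) d"
      unfolding sum_on_line_def
      using sum.reindex_bij_betw[of "\<lambda>l. t * l" UNIV UNIV "\<lambda>m. w (\<lambda>i. (p i + t * u i) + m * d i)"]
      by simp
    with False show ?thesis
      by simp
  qed
  have "(\<Sum>l\<in>UNIV. sum_on_line w p (\<lambda>i. u i + l * d i))
      = (\<Sum>t\<in>UNIV. \<Sum>l\<in>UNIV. w (\<lambda>i. (p i + t * u i) + (t * l) * d i))"
    unfolding sum_on_line_def by (subst sum.swap) (simp add: algebra_simps)
  also have "\<dots> = (\<Sum>t\<in>UNIV. sum_on_line w (\<lambda>i. p i + t * u i) d)
      - (\<Sum>t\<in>(UNIV::'a set). if t = 0 then sum_on_line w p d else 0)"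
    unfolding pencil_slice by (rule sum_subtractf)
  finally show ?thesis
    by simp
qed

lemma sum_on_line_eq_0_by_pencils:
  fixes w :: "('n::finite \<Rightarrow> 'a::{field,finite}) \<Rightarrow> 'b::ring_1"
  assumes q: "of_nat CARD('a) = (0::'b)"
    and pencils: "\<And>p l. sum_on_line w p (\<lambda>i. u i + l * d i) = 0"
  shows "sum_on_line w a d = 0"
proof -
  define S where "S s = sum_on_line w (\<lambda>i. a i + s * u i) d" for s
  define T where "T = (\<Sum>s\<in>UNIV. S s)"
  have parallel_eq: "S k = T" for k
  proof -
    let ?p = "\<lambda>i. a i + k * u i"
    have shift: "bij (\<lambda>s. k + s)"
      by (rule bij_betw_byWitness[where f'="\<lambda>x. x - k"]) auto
    have "(\<Sum>s\<in>UNIV. sum_on_line w (\<lambda>i. ?p i + s * u i) d) = (\<Sum>s\<in>UNIV. S (k + s))"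
      by (simp add: S_def distrib_right add.assoc)
    also have "\<dots> = T"
      unfolding T_def by (rule sum.reindex_bij_betw[OF shift])
    finally show ?thesis
      using sum_pencil[OF q, of w ?p u d] pencils by (simp add: S_def)
  qed
  have "T = (\<Sum>s\<in>UNIV. S s)"
    by (fact T_def)
  also have "\<dots> = (\<Sum>s\<in>(UNIV::'a set). T)"
    by (simp add: parallel_eq)
  also have "\<dots> = of_nat CARD('a) * T"
    by simp
  finally have "T = 0"
    using q by simp
  then show ?thesis
    using parallel_eq[of 0] by (simp add: S_def)
qed

lemma design_code_TA_blocks_subset:
  fixes c :: "'n::finite \<Rightarrow> 'a::{field,finite}"
  assumes q: "of_nat CARD('a) = (0::'b::field)" and "\<exists>i. c i \<noteq> 0"
  shows "design_code (TA_blocks c) \<subseteq> (design_code AG1_blocks :: (('n \<Rightarrow> 'a) \<Rightarrow> 'b) set)"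
proof
  obtain u where u: "dot c u \<noteq> 0"
    using assms(2) exists_dot_ne_0 by blast
  fix w :: "('n \<Rightarrow> 'a) \<Rightarrow> 'b"
  assume "w \<in> design_code (TA_blocks c)"
  then have TA_lines: "sum_on_line w a v = 0" if "dot c v \<noteq> 0" for a v
    using that mem_design_code_TA_blocks_iff by blast
  have "sum_on_line w a d = 0" for a d
  proof (cases "dot c d = 0")
    case True
    then have "dot c (\<lambda>i. u i + l * d i) \<noteq> 0" for l
      using u by (simp add: dot_add_scale)
    then show ?thesis
      using sum_on_line_eq_0_by_pencils[OF q] TA_lines by blast
  next
    case False
    then show ?thesis
      by (rule TA_lines)
  qed
  then show "w \<in> design_code AG1_blocks"
    using mem_design_code_AG1_blocks_iff by blast
qed

theorem mainTheorem5:
  fixes c :: "'n::finite \<Rightarrow> 'a::{field,finite}" and p e :: nat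
  assumes "prime p" and "e \<ge> 1" and "CARD('a) = p ^ e"
    and "CARD('b::{field,finite}) = p"
    and "CARD('n) \<ge> 2" and "\<exists>i. c i \<noteq> 0"
  shows "(design_code (AG1_blocks :: ('n \<Rightarrow> 'a) set set) :: (('n \<Rightarrow> 'a) \<Rightarrow> 'b) set)
         = design_code (TA_blocks c)"
proof
  show "design_code AG1_blocks \<subseteq> design_code (TA_blocks c)"
    unfolding AG1_blocks_def TA_blocks_def by (intro design_code_antimono) blast
  have "(of_nat CARD('a) :: 'b) = 0"
    using assms(2-4) of_nat_CARD_eq_0[where 'b='b] by (simp add: of_nat_power power_0_left)
  then show "design_code (TA_blocks c) \<subseteq> (design_code AG1_blocks :: (('n \<Rightarrow> 'a) \<Rightarrow> 'b) set)"
    using assms(6) by (rule design_code_TA_blocks_subset)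
qed

end
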